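(* Fix $x\in\mathbb{C}$. The function $f:[0,\infty)\to\mathbb{R}$ defined by $$f(s):=\log\Big(\frac{1+a+\sqrt{(1+a)^2-b^2}}{2}\Big),\qquad a:=|x|^2+s,\quad b:=2|x|\sqrt{s},$$ (i.e. $f(|y|^2)$ with $a=|x|^2+|y|^2$, $b=2|x||y|$) is strictly increasing on $[0,\infty)$.
   Context: $\log$ is the logarithm in a fixed base. *)

theory Defs
  imports "HOL-Analysis.Analysis"
begin

end

theory Submission
  imports Defs
begin

text \<open>Write \<open>r = |x|\<close>. The discriminant \<open>(1 + a)\<^sup>2 - b\<^sup>2\<close> equals \<open>v\<^sup>2 + 4 r\<^sup>2\<close> with
  \<open>v = 1 - r\<^sup>2 + s\<close>, so the argument of the logarithm is \<open>r\<^sup>2 + (v + sqrt (v\<^sup>2 + 4 r\<^sup>2)) / 2\<close>.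
  The map \<open>v \<mapsto> v + sqrt (v\<^sup>2 + k)\<close> is strictly increasing on all of \<open>\<real>\<close> when \<open>k > 0\<close>,
  and on \<open>v \<ge> 0\<close> when \<open>k = 0\<close>; the latter case arises only for \<open>r = 0\<close>, where \<open>v = 1 + s > 0\<close>.\<close>

lemma plus_sqrt_square_add_strict_mono:
  fixes v w k :: real
  assumes "v < w" and "0 \<le> k" and "0 < k \<or> 0 \<le> v"
  shows "v + sqrt (v\<^sup>2 + k) < w + sqrt (w\<^sup>2 + k)"
proof (cases "v\<^sup>2 \<le> w\<^sup>2")
  case True
  then have "sqrt (v\<^sup>2 + k) \<le> sqrt (w\<^sup>2 + k)" by simp
  with \<open>v < w\<close> show ?thesis by linarith
next
  case False
  with \<open>v < w\<close> have "v < 0"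
    by (metis linorder_not_less order_less_imp_le power_mono)
  with assms(3) have "0 < k" by linarith
  define S where "S = sqrt (w\<^sup>2 + k)"
  have S_square: "S\<^sup>2 = w\<^sup>2 + k"
    unfolding S_def using \<open>0 \<le> k\<close> by simp
  have "\<bar>w\<bar> < S"
    unfolding S_def using \<open>0 < k\<close> real_sqrt_less_mono[of "w\<^sup>2" "w\<^sup>2 + k"] by simp
  then have "0 < 2 * (w - v) * (w + S)"
    using \<open>v < w\<close> by simp
  also have "2 * (w - v) * (w + S) = (w - v + S)\<^sup>2 - (v\<^sup>2 + k)"
    using S_square by (simp add: power2_eq_square algebra_simps)
  finally have "sqrt (v\<^sup>2 + k) < w - v + S"
    using \<open>v < w\<close> \<open>\<bar>w\<bar> < S\<close> by (intro real_less_lsqrt) auto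
  then show ?thesis
    unfolding S_def by linarith
qed

lemma discriminant_eq_square_add:
  fixes r s :: real
  assumes "0 \<le> s"
  shows "(1 + (r\<^sup>2 + s))\<^sup>2 - (2 * r * sqrt s)\<^sup>2 = (1 - r\<^sup>2 + s)\<^sup>2 + 4 * r\<^sup>2"
  using assms by (simp add: power_mult_distrib power2_eq_square algebra_simps)

theorem lemma2:
  fixes x :: complex and \<beta> :: real
  assumes "\<beta> > 1"
  shows "strict_mono_on {0::real..}
    (\<lambda>s. let a = (cmod x)\<^sup>2 + s; b = 2 * cmod x * sqrt s
         in log \<beta> ((1 + a + sqrt ((1 + a)\<^sup>2 - b\<^sup>2)) / 2))"
proof -
  define r where "r = cmod x"
  define g where "g u = 1 + (r\<^sup>2 + u) + sqrt ((1 - r\<^sup>2 + u)\<^sup>2 + 4 * r\<^sup>2)" for u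
  have "strict_mono_on {0..} (\<lambda>s. log \<beta> (g s / 2))"
  proof (rule strict_mono_onI)
    fix s t :: real
    assume "s \<in> {0..}" and "s < t"
    have "(1 - r\<^sup>2 + s) + sqrt ((1 - r\<^sup>2 + s)\<^sup>2 + 4 * r\<^sup>2)
        < (1 - r\<^sup>2 + t) + sqrt ((1 - r\<^sup>2 + t)\<^sup>2 + 4 * r\<^sup>2)"
      using \<open>s < t\<close> \<open>s \<in> {0..}\<close>
      by (intro plus_sqrt_square_add_strict_mono) (auto simp: r_def)
    then have "g s < g t"
      unfolding g_def by linarith
    moreover have "0 < g s"
      unfolding g_def using \<open>s \<in> {0..}\<close> by (simp add: add_pos_nonneg)
    ultimately show "log \<beta> (g s / 2) < log \<beta> (g t / 2)"
      using \<open>\<beta> > 1\<close> by simp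
  qed
  then show ?thesis
    unfolding strict_mono_on_def
    by (simp add: Let_def discriminant_eq_square_add g_def flip: r_def)
qed

end
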